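(* Let $a\in[0,\infty)$ and let $\theta:[0,1]\to[0,\infty]$ be a continuous and strictly decreasing function such that (1) $\theta(x)=\infty$ if and only if $x=0$, and (2) $\theta(x)=\frac{a}{2}$ if and only if $x=1$. Let $\vartheta:[0,\infty]\to[0,1]$ be given by $\vartheta(x)=(\theta+\frac{a}{2})^{(-1)}(x)$ for all $x\in[0,\infty]$. Then the function $O_{\theta,\vartheta}:[0,1]^2\to[0,1]$, $O_{\theta,\vartheta}(x,y)=\vartheta(\theta(x)+\theta(y))$, is a positive t-norm.
   Context: Arithmetic in $[0,\infty]$ uses $c+\infty=\infty$. The function $\theta+\frac{a}{2}:[0,1]\to[0,\infty]$ is $x\mapsto\theta(x)+\frac a2$. For a decreasing function $f:[0,1]\to[0,\infty]$, its pseudo-inverse $f^{(-1)}:[0,\infty]\to[0,1]$ is $f^{(-1)}(y)=\sup\{x\in[0,1]\mid f(x)>y\}$ (with $\sup\emptyset=0$). A t-norm is a commutative, associative map $T:[0,1]^2\to[0,1]$, increasing in each variable, with $T(x,1)=x$ for all $x$; it is positive if $T(x,y)=0$ implies $x=0$ or $y=0$. *)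

theory Defs
  imports "HOL-Analysis.Analysis" "HOL-Library.Extended_Nonnegative_Real"
begin

text \<open>[0,infinity] is modelled by ennreal; [0,1] by the reals in {0..1}.
  Functions on [0,1] are real-valued/ennreal-valued functions on real whose
  values outside {0..1} are irrelevant.\<close>

definition pseudo_inv :: "(real \<Rightarrow> ennreal) \<Rightarrow> ennreal \<Rightarrow> real" where
  "pseudo_inv f y =
     (if {x \<in> {0..1}. f x > y} = {} then 0 else Sup {x \<in> {0..1}. f x > y})"

definition is_tnorm :: "(real \<Rightarrow> real \<Rightarrow> real) \<Rightarrow> bool" where
  "is_tnorm T \<longleftrightarrow>
     (\<forall>x\<in>{0..1}. \<forall>y\<in>{0..1}. T x y \<in> {0..1}) \<and>
     (\<forall>x\<in>{0..1}. \<forall>y\<in>{0..1}. T x y = T y x) \<and>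
     (\<forall>x\<in>{0..1}. \<forall>y\<in>{0..1}. \<forall>z\<in>{0..1}. T (T x y) z = T x (T y z)) \<and>
     (\<forall>x\<in>{0..1}. \<forall>x'\<in>{0..1}. \<forall>y\<in>{0..1}. x \<le> x' \<longrightarrow> T x y \<le> T x' y) \<and>
     (\<forall>x\<in>{0..1}. \<forall>y\<in>{0..1}. \<forall>y'\<in>{0..1}. y \<le> y' \<longrightarrow> T x y \<le> T x y') \<and>
     (\<forall>x\<in>{0..1}. T x 1 = x)"

definition positive_tnorm :: "(real \<Rightarrow> real \<Rightarrow> real) \<Rightarrow> bool" where
  "positive_tnorm T \<longleftrightarrow> is_tnorm T \<and>
     (\<forall>x\<in>{0..1}. \<forall>y\<in>{0..1}. T x y = 0 \<longrightarrow> x = 0 \<or> y = 0)"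

end

theory Submission
  imports Defs
begin

text \<open>Write \<open>g = \<theta> + a/2\<close>. Being continuous and strictly decreasing with \<open>g 0 = \<infinity>\<close>,
  \<open>g\<close> maps \<open>[0,1]\<close> onto \<open>[a, \<infinity>]\<close>, where its pseudo-inverse is a right inverse; as
  \<open>\<theta> \<ge> a/2\<close>, this gives \<open>\<theta> (O x y) + a/2 = \<theta> x + \<theta> y\<close>. Cancelling the finite
  constant \<open>a/2\<close> transports commutativity, associativity and monotonicity from addition
  in \<open>[0,\<infinity>]\<close>; the unit law comes from \<open>\<theta> 1 = a/2\<close> and positivity from \<open>\<theta>\<close> being
  infinite only at \<open>0\<close>.\<close>

lemma pseudo_inv_range: "pseudo_inv f s \<in> {0..1}"
proof (cases "{x \<in> {0..1}. f x > s} = {}")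
  case True
  then show ?thesis by (simp add: pseudo_inv_def)
next
  case False
  then obtain x where x: "x \<in> {0..1}" "f x > s" by auto
  have "bdd_above {x \<in> {0..1::real}. f x > s}" by (rule bdd_aboveI[of _ 1]) auto
  then have "x \<le> Sup {x \<in> {0..1}. f x > s}" using x by (intro cSup_upper) auto
  moreover have "Sup {x \<in> {0..1}. f x > s} \<le> 1" using False by (intro cSup_least) auto
  ultimately show ?thesis using False x by (simp add: pseudo_inv_def)
qed

lemma strict_antimono_on_less_iff:
  fixes f :: "'a::linorder \<Rightarrow> 'b::linorder"
  assumes "strict_antimono_on A f" "x \<in> A" "y \<in> A"
  shows "f x < f y \<longleftrightarrow> y < x"
  using assms by (metis monotone_onD not_less_iff_gr_or_eq order.asym)

lemma pseudo_inv_apply: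
  assumes "strict_antimono_on {0..1} f" "x \<in> {0..1}"
  shows "pseudo_inv f (f x) = x"
proof -
  have "{t \<in> {0..1}. f t > f x} = {0..<x}"
    using assms by (auto simp: strict_antimono_on_less_iff)
  then show ?thesis using assms(2) by (simp add: pseudo_inv_def)
qed

lemma pseudo_inv_right_inverse:
  fixes f :: "real \<Rightarrow> ennreal"
  assumes "continuous_on {0..1} f" "strict_antimono_on {0..1} f"
    and "f 0 = \<infinity>" "f 1 \<le> s"
  shows "f (pseudo_inv f s) = s"
proof -
  obtain x where "x \<in> {0..1}" "f x = s"
    using IVT2'[of f 1 s 0] assms by auto
  then show ?thesis using pseudo_inv_apply[OF assms(2)] by auto
qed

locale tnorm_generator =
  fixes \<theta> :: "real \<Rightarrow> ennreal" and c :: ennreal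
  assumes continuous: "continuous_on {0..1} \<theta>"
    and strict_antimono: "strict_antimono_on {0..1} \<theta>"
    and \<theta>_0: "\<theta> 0 = \<infinity>"
    and \<theta>_1: "\<theta> 1 = c"
    and c_finite: "c \<noteq> \<infinity>"
begin

definition tnorm :: "real \<Rightarrow> real \<Rightarrow> real" where
  "tnorm x y = pseudo_inv (\<lambda>t. \<theta> t + c) (\<theta> x + \<theta> y)"

lemma \<theta>_less_iff: "x \<in> {0..1} \<Longrightarrow> y \<in> {0..1} \<Longrightarrow> \<theta> x < \<theta> y \<longleftrightarrow> y < x"
  using strict_antimono by (rule strict_antimono_on_less_iff)

lemma \<theta>_le_iff: "x \<in> {0..1} \<Longrightarrow> y \<in> {0..1} \<Longrightarrow> \<theta> x \<le> \<theta> y \<longleftrightarrow> y \<le> x"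
  by (meson \<theta>_less_iff not_less)

lemma \<theta>_eq_iff: "x \<in> {0..1} \<Longrightarrow> y \<in> {0..1} \<Longrightarrow> \<theta> x = \<theta> y \<longleftrightarrow> x = y"
  by (metis \<theta>_le_iff order.antisym order.refl)

lemma \<theta>_ge_c: "x \<in> {0..1} \<Longrightarrow> c \<le> \<theta> x"
  using \<theta>_le_iff[of 1 x] \<theta>_1 by auto

lemma \<theta>_eq_infinity_iff: "x \<in> {0..1} \<Longrightarrow> \<theta> x = \<infinity> \<longleftrightarrow> x = 0"
  using \<theta>_less_iff[of x 0] \<theta>_0 by (auto simp: top.not_eq_extremum)

lemma tnorm_range: "tnorm x y \<in> {0..1}"
  unfolding tnorm_def by (rule pseudo_inv_range)

lemma \<theta>_tnorm:
  assumes "x \<in> {0..1}" "y \<in> {0..1}"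
  shows "\<theta> (tnorm x y) + c = \<theta> x + \<theta> y"
proof -
  have "strict_antimono_on {0..1} (\<lambda>t. \<theta> t + c)"
    using c_finite by (intro monotone_onI) (simp add: \<theta>_less_iff)
  moreover have "continuous_on {0..1} (\<lambda>t. \<theta> t + c)"
    using continuous by (intro continuous_intros)
  moreover have "\<theta> 1 + c \<le> \<theta> x + \<theta> y"
    using \<theta>_1 \<theta>_ge_c assms by (simp add: add_mono)
  ultimately show ?thesis
    unfolding tnorm_def using \<theta>_0 by (subst pseudo_inv_right_inverse) auto
qed

lemma tnorm_eqI:
  assumes "x \<in> {0..1}" "y \<in> {0..1}" "z \<in> {0..1}" "\<theta> x + \<theta> y = \<theta> z + c"
  shows "tnorm x y = z"
  using \<theta>_tnorm[OF assms(1,2)] assms(4) c_finite tnorm_range assms(3)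
  by (simp add: \<theta>_eq_iff)

lemma tnorm_commute: "tnorm x y = tnorm y x"
  by (simp add: tnorm_def add.commute)

lemma tnorm_assoc:
  assumes "x \<in> {0..1}" "y \<in> {0..1}" "z \<in> {0..1}"
  shows "tnorm (tnorm x y) z = tnorm x (tnorm y z)"
proof -
  have "c + (\<theta> (tnorm x y) + \<theta> z) = \<theta> x + \<theta> y + \<theta> z"
    using \<theta>_tnorm[of x y] assms by (simp add: ac_simps)
  also have "\<dots> = c + (\<theta> x + \<theta> (tnorm y z))"
    using \<theta>_tnorm[of y z] assms by (simp add: ac_simps)
  finally have "\<theta> (tnorm x y) + \<theta> z = \<theta> x + \<theta> (tnorm y z)"
    using c_finite by simp
  then show ?thesis by (simp add: tnorm_def)
qed

lemma tnorm_mono: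
  assumes "x \<in> {0..1}" "x' \<in> {0..1}" "y \<in> {0..1}" "x \<le> x'"
  shows "tnorm x y \<le> tnorm x' y"
proof -
  have "\<theta> (tnorm x' y) + c \<le> \<theta> (tnorm x y) + c"
    using assms by (simp add: \<theta>_tnorm \<theta>_le_iff add_right_mono)
  then show ?thesis using c_finite tnorm_range by (simp add: \<theta>_le_iff)
qed

lemma tnorm_one: "x \<in> {0..1} \<Longrightarrow> tnorm x 1 = x"
  by (rule tnorm_eqI) (simp_all add: \<theta>_1)

lemma tnorm_eq_0:
  assumes "x \<in> {0..1}" "y \<in> {0..1}" "tnorm x y = 0"
  shows "x = 0 \<or> y = 0"
proof -
  have "\<theta> x + \<theta> y = \<infinity>"
    using \<theta>_tnorm[of x y] assms \<theta>_0 by simp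
  then have "\<theta> x = \<infinity> \<or> \<theta> y = \<infinity>" by simp
  then show ?thesis using \<theta>_eq_infinity_iff assms(1,2) by blast
qed

lemma positive_tnorm: "positive_tnorm tnorm"
proof -
  have "tnorm x y \<le> tnorm x y'" if "x \<in> {0..1}" "y \<in> {0..1}" "y' \<in> {0..1}" "y \<le> y'"
    for x y y'
    using tnorm_mono[OF that(2,3,1,4)] by (simp add: tnorm_commute)
  then show ?thesis
    unfolding positive_tnorm_def is_tnorm_def
    using tnorm_range tnorm_assoc tnorm_mono tnorm_one tnorm_eq_0 by (simp add: tnorm_commute)
qed

end

theorem proposition4p2:
  fixes a :: real and \<theta> :: "real \<Rightarrow> ennreal"
  assumes a_nonneg: "a \<ge> 0"
    and cont: "continuous_on {0..1} \<theta>"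
    and strict_dec: "\<forall>x\<in>{0..1}. \<forall>y\<in>{0..1}. x < y \<longrightarrow> \<theta> y < \<theta> x"
    and inf_iff: "\<forall>x\<in>{0..1}. \<theta> x = \<infinity> \<longleftrightarrow> x = 0"
    and half_iff: "\<forall>x\<in>{0..1}. \<theta> x = ennreal (a / 2) \<longleftrightarrow> x = 1"
  shows "positive_tnorm
           (\<lambda>x y. pseudo_inv (\<lambda>t. \<theta> t + ennreal (a / 2)) (\<theta> x + \<theta> y))"
proof -
  interpret tnorm_generator \<theta> "ennreal (a / 2)"
  proof
    show "strict_antimono_on {0..1} \<theta>"
      using strict_dec by (intro monotone_onI) auto
  qed (use cont inf_iff half_iff in auto)
  show ?thesis
    using positive_tnorm unfolding tnorm_def[abs_def] .
qed

end
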